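(* Let $\alpha,\beta,p\in\mathbb{C}$, $s^2=\alpha^2-p^2$, $t^2=\beta^2-p^2$, and let $\rho\neq 0$ be a constant. Suppose $\varphi_1,\varphi_2:\mathbb{Z}^2\to\mathbb{C}\setminus\{0\}$ satisfy, for all $n,m\in\mathbb{Z}$, the discrete Abel relations $$\varphi_1\widetilde{\varphi}_2-\varphi_2\widetilde{\varphi}_1=\varphi_1\widehat{\varphi}_2-\varphi_2\widehat{\varphi}_1=\rho\,s^{2n}t^{2m}.$$ Then each of $\varphi=\varphi_1$ and $\varphi=\varphi_2$ satisfies the lattice eigenfunction KdV (leKdV) equation $$(\alpha^2-p^2)\,\varphi\widehat{\varphi}-(\beta^2-p^2)\,\varphi\widetilde{\varphi}-\widetilde{\varphi}\,\widehat{\widetilde{\varphi}}+\widehat{\varphi}\,\widehat{\widetilde{\varphi}}=0 .$$ In other words, these relations define an auto-Bäcklund transformation between $\varphi_1$ and $\varphi_2$ as solutions of the leKdV equation. (In particular this applies to two linearly independent solutions of the Lax pair $\widetilde{\widetilde{\varphi}}+h\widetilde{\varphi}+\alpha^2\varphi=p^2\varphi$, $\widehat{\varphi}=\widetilde{\varphi}-g\varphi$ with $\widehat h-\widetilde h=\widetilde{\widetilde g}-g$, $(h+\widetilde g)g=\beta^2-\alpha^2$, which satisfy these relations.)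
   Context: Shift notation: for a function $f$ on $\mathbb{Z}^2$ (variables $n,m$), $\widetilde f(n,m)=f(n+1,m)$, $\widehat f(n,m)=f(n,m+1)$, and $\widehat{\widetilde f}(n,m)=f(n+1,m+1)$. *)

theory Defs
  imports Complex_Main
begin

end

theory Submission
  imports Defs
begin

text \<open>
  On an elementary square write the vectors \<open>(\<phi>1, \<phi>2)\<close> at the four corners as
  \<open>u\<close>, \<open>\<tilde>u\<close>, \<open>\<hat>u\<close>, \<open>\<hat>\<tilde>u\<close>. The Abel relations prescribe the four determinants
  \<open>det(u,\<tilde>u) = det(u,\<hat>u) = W\<close>, \<open>det(\<tilde>u,\<hat>\<tilde>u) = s\<^sup>2 W\<close>, \<open>det(\<hat>u,\<hat>\<tilde>u) = t\<^sup>2 W\<close>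
  with \<open>W = \<rho> s\<^bsup>2n\<^esup> t\<^bsup>2m\<^esup> \<noteq> 0\<close>. The Grassmann-Pluecker relation
  \<open>det(\<hat>u,\<hat>\<tilde>u) \<tilde>u - det(\<tilde>u,\<hat>\<tilde>u) \<hat>u + det(\<tilde>u,\<hat>u) \<hat>\<tilde>u = 0\<close> between three vectors
  of the plane, together with \<open>det(u, \<tilde>u - \<hat>u) = 0\<close>, which forces
  \<open>\<phi> det(\<tilde>u,\<hat>u) = (\<tilde>\<phi> - \<hat>\<phi>) W\<close> for each component \<open>\<phi>\<close>, yields leKdV for that component
  after division by \<open>W\<close>.
\<close>

lemma leKdV_square_of_Casoratians:
  fixes a b A B P Q c d W S T :: "'a::field"
  assumes tilde: "a*B - b*A = W" and hat: "a*Q - b*P = W"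
    and hat_shifted: "A*d - B*c = S*W" and tilde_shifted: "P*d - Q*c = T*W"
    and W: "W \<noteq> 0"
  shows "S*a*P - T*a*A - A*c + P*c = 0"
proof -
  have pluecker: "(P*d - Q*c)*A - (A*d - B*c)*P + (A*Q - B*P)*c = 0"
    by (simp add: algebra_simps)
  have "a*(A*Q - B*P) = A*(a*Q) - P*(a*B)"
    by (simp add: algebra_simps)
  also have "\<dots> = (A - P)*W"
    using tilde hat by (simp add: algebra_simps eq_diff_eq)
  finally have cross: "a*(A*Q - B*P) = (A - P)*W" .
  have "W*(S*a*P - T*a*A - A*c + P*c) = a*P*(S*W) - a*A*(T*W) - ((A - P)*W)*c"
    by (simp add: algebra_simps)
  also have "\<dots> = a*P*(A*d - B*c) - a*A*(P*d - Q*c) - a*(A*Q - B*P)*c"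
    by (simp only: hat_shifted tilde_shifted cross)
  also have "\<dots> = - a*((P*d - Q*c)*A - (A*d - B*c)*P + (A*Q - B*P)*c)"
    by (simp add: algebra_simps)
  also have "\<dots> = 0"
    by (simp only: pluecker mult_zero_right)
  finally show ?thesis
    using W by simp
qed

lemma power_int_double_Suc:
  fixes s :: "'a::field"
  assumes "s \<noteq> 0"
  shows "s powi (2*(n+1)) = s^2 * s powi (2*n)"
  using assms by (simp add: distrib_left power_int_add mult.commute)

theorem proposition3p1:
  fixes \<alpha> \<beta> p s t \<rho> :: complex
    and \<phi>1 \<phi>2 :: "int \<Rightarrow> int \<Rightarrow> complex"
  assumes hs: "s^2 = \<alpha>^2 - p^2" and ht: "t^2 = \<beta>^2 - p^2"
    and s0: "s \<noteq> 0" and t0: "t \<noteq> 0"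
    and rho: "\<rho> \<noteq> 0"
    and nz1: "\<And>n m. \<phi>1 n m \<noteq> 0" and nz2: "\<And>n m. \<phi>2 n m \<noteq> 0"
    and tilde: "\<And>n m. \<phi>1 n m * \<phi>2 (n+1) m - \<phi>2 n m * \<phi>1 (n+1) m
                   = \<rho> * s powi (2*n) * t powi (2*m)"
    and hat: "\<And>n m. \<phi>1 n m * \<phi>2 n (m+1) - \<phi>2 n m * \<phi>1 n (m+1)
                   = \<rho> * s powi (2*n) * t powi (2*m)"
  shows "\<forall>\<phi> \<in> {\<phi>1, \<phi>2}. \<forall>n m.
           (\<alpha>^2 - p^2) * \<phi> n m * \<phi> n (m+1) - (\<beta>^2 - p^2) * \<phi> n m * \<phi> (n+1) m
           - \<phi> (n+1) m * \<phi> (n+1) (m+1) + \<phi> n (m+1) * \<phi> (n+1) (m+1) = 0"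
proof (intro ballI allI)
  fix \<phi> n m
  assume \<phi>: "\<phi> \<in> {\<phi>1, \<phi>2}"
  define W where "W = \<rho> * s powi (2*n) * t powi (2*m)"
  have W: "W \<noteq> 0" "-W \<noteq> 0"
    using s0 t0 rho by (simp_all add: W_def)
  have tilde_nm: "\<phi>1 n m * \<phi>2 (n+1) m - \<phi>2 n m * \<phi>1 (n+1) m = W"
    using tilde by (simp add: W_def)
  have hat_nm: "\<phi>1 n m * \<phi>2 n (m+1) - \<phi>2 n m * \<phi>1 n (m+1) = W"
    using hat by (simp add: W_def)
  have hat_shifted: "\<phi>1 (n+1) m * \<phi>2 (n+1) (m+1) - \<phi>2 (n+1) m * \<phi>1 (n+1) (m+1) = s^2 * W"
    using hat[of "n+1" m] power_int_double_Suc[OF s0, of n] by (simp add: W_def)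
  have tilde_shifted: "\<phi>1 n (m+1) * \<phi>2 (n+1) (m+1) - \<phi>2 n (m+1) * \<phi>1 (n+1) (m+1) = t^2 * W"
    using tilde[of n "m+1"] power_int_double_Suc[OF t0, of m] by (simp add: W_def)
  have "s^2 * \<phi>1 n m * \<phi>1 n (m+1) - t^2 * \<phi>1 n m * \<phi>1 (n+1) m
          - \<phi>1 (n+1) m * \<phi>1 (n+1) (m+1) + \<phi>1 n (m+1) * \<phi>1 (n+1) (m+1) = 0"
    by (rule leKdV_square_of_Casoratians[OF tilde_nm hat_nm hat_shifted tilde_shifted W(1)])
  moreover have "s^2 * \<phi>2 n m * \<phi>2 n (m+1) - t^2 * \<phi>2 n m * \<phi>2 (n+1) m
          - \<phi>2 (n+1) m * \<phi>2 (n+1) (m+1) + \<phi>2 n (m+1) * \<phi>2 (n+1) (m+1) = 0"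
    using tilde_nm hat_nm hat_shifted tilde_shifted W(2)
    by (intro leKdV_square_of_Casoratians[where b="\<phi>1 n m" and B="\<phi>1 (n+1) m"
          and Q="\<phi>1 n (m+1)" and d="\<phi>1 (n+1) (m+1)" and W="-W"])
      (simp_all add: algebra_simps)
  ultimately show "(\<alpha>^2 - p^2) * \<phi> n m * \<phi> n (m+1) - (\<beta>^2 - p^2) * \<phi> n m * \<phi> (n+1) m
           - \<phi> (n+1) m * \<phi> (n+1) (m+1) + \<phi> n (m+1) * \<phi> (n+1) (m+1) = 0"
    using \<phi> hs ht by auto
qed

end
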